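(* Let $e>0$, $\beta>0$, $v>0$ and a sign $s\in\{+1,-1\}$. Define the winding-gauge configuration $\phi_w(\tau)=2v\,t_1\exp\!\big(s\tfrac{4\pi i}{\beta}t_3\tau\big)$ and $a^{w}_\mu=-s\,\delta_{\mu4}\frac{2\pi}{e\beta}t_3$, and the unitary-gauge configuration $\phi_u=2v\,t_3$, $a^u_\mu=0$. Then there exists a map $\tilde\Omega:[0,\beta]\to\mathrm{SU}(2)$, depending only on $\tau$, which is smooth except at a single point where it is discontinuous (singular), with $\tilde\Omega(0)=\tilde\Omega(\beta)$ (periodic), such that: (i) $\tilde\Omega(\tau)\phi_w(\tau)\tilde\Omega(\tau)^\dagger=\phi_u$ for all $\tau$; (ii) $\tilde\Omega a^w_\mu\tilde\Omega^\dagger+\frac ie\tilde\Omega\partial_\mu\tilde\Omega^\dagger=a^u_\mu$ at all $\tau$ away from the discontinuity; (iii) (admissibility) for every continuous $\mathfrak{su}(2)$-valued function $\delta a(\tau)$ on $[0,\beta]$ with $\delta a(0)=\delta a(\beta)$, the function $\tilde\Omega\,\delta a\,\tilde\Omega^\dagger$ is continuous on $[0,\beta]$ and takes equal values at $0$ and $\beta$. Under this gauge transformation the Polyakov loop changes from $P[a^w]=-\mathbb 1_2$ to $P[a^u]=\mathbb 1_2$.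
   Context: Gauge group SU(2), $t_a=\frac12\sigma_a$ (Pauli matrices). A gauge transformation by $\Omega$ acts as $\phi\to\Omega\phi\Omega^\dagger$, $a_\mu\to\Omega a_\mu\Omega^\dagger+\frac ie\Omega\partial_\mu\Omega^\dagger$, with $\partial_4=\partial_\tau$. For a $\tau$-independent temporal component $a_4$ proportional to $t_3$, the Polyakov loop is $P[a]=\exp\big(ie\int_0^\beta d\tau\,a_4\big)$ (no path ordering needed). *)

theory Defs
  imports "HOL-Analysis.Analysis"
begin

type_synonym cmat = "complex^2^2"

definition mat2 :: "complex \<Rightarrow> complex \<Rightarrow> complex \<Rightarrow> complex \<Rightarrow> cmat" where
  "mat2 a b c d = vector [vector [a, b], vector [c, d]]"

text \<open>Generators t_a = sigma_a / 2 (t_2 is listed for completeness).\<close>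
definition t1 :: cmat where "t1 = mat2 0 (1/2) (1/2) 0"
definition t2 :: cmat where "t2 = mat2 0 (-\<i>/2) (\<i>/2) 0"
definition t3 :: cmat where "t3 = mat2 (1/2) 0 0 (-1/2)"

definition csmul :: "complex \<Rightarrow> cmat \<Rightarrow> cmat" where
  "csmul c A = (\<chi> i j. c * A $ i $ j)"

definition dagger :: "cmat \<Rightarrow> cmat" where
  "dagger A = (\<chi> i j. cnj (A $ j $ i))"

fun mpow :: "cmat \<Rightarrow> nat \<Rightarrow> cmat" where
  "mpow A 0 = mat 1"
| "mpow A (Suc n) = A ** mpow A n"

definition mexp :: "cmat \<Rightarrow> cmat" where
  "mexp A = (\<Sum>n. (1 / fact n) *\<^sub>R mpow A n)"

text \<open>The group SU(2) and the Lie algebra su(2) (physics convention: Hermitian, traceless,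
  i.e. real combinations of the t_a).\<close>
definition SU2 :: "cmat set" where
  "SU2 = {U. U ** dagger U = mat 1 \<and> det U = 1}"

definition su2 :: "cmat set" where
  "su2 = {A. dagger A = A \<and> trace A = 0}"

definition smooth_on :: "real set \<Rightarrow> (real \<Rightarrow> cmat) \<Rightarrow> bool" where
  "smooth_on S f \<longleftrightarrow> (\<exists>D :: nat \<Rightarrow> real \<Rightarrow> cmat. D 0 = f \<and>
      (\<forall>n. \<forall>t\<in>S. (D n has_vector_derivative D (Suc n) t) (at t within S)))"

text \<open>Configurations (all depend only on tau; index mu ranges over 1..4, with mu = 4 the time
  direction).\<close>
definition phi_w :: "real \<Rightarrow> real \<Rightarrow> real \<Rightarrow> real \<Rightarrow> cmat" where
  "phi_w v s \<beta> \<tau> = csmul (of_real (2 * v))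
      (t1 ** mexp (csmul (of_real (s * 4 * pi / \<beta> * \<tau>) * \<i>) t3))"

definition a_w :: "real \<Rightarrow> real \<Rightarrow> real \<Rightarrow> nat \<Rightarrow> real \<Rightarrow> cmat" where
  "a_w e s \<beta> \<mu> \<tau> = (if \<mu> = 4 then csmul (of_real (- s * 2 * pi / (e * \<beta>))) t3 else 0)"

definition phi_u :: "real \<Rightarrow> cmat" where
  "phi_u v = csmul (of_real (2 * v)) t3"

definition a_u :: "nat \<Rightarrow> real \<Rightarrow> cmat" where
  "a_u \<mu> \<tau> = 0"

definition dmu :: "real \<Rightarrow> nat \<Rightarrow> (real \<Rightarrow> cmat) \<Rightarrow> real \<Rightarrow> cmat" where
  "dmu \<beta> \<mu> f \<tau> = (if \<mu> = 4 then vector_derivative f (at \<tau> within {0..\<beta>}) else 0)"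

definition gauge_a :: "real \<Rightarrow> real \<Rightarrow> (real \<Rightarrow> cmat) \<Rightarrow> (nat \<Rightarrow> real \<Rightarrow> cmat) \<Rightarrow> nat \<Rightarrow> real \<Rightarrow> cmat" where
  "gauge_a e \<beta> \<Omega> a \<mu> \<tau> =
     \<Omega> \<tau> ** a \<mu> \<tau> ** dagger (\<Omega> \<tau>)
     + csmul (\<i> / of_real e) (\<Omega> \<tau> ** dmu \<beta> \<mu> (\<lambda>t. dagger (\<Omega> t)) \<tau>)"

text \<open>Polyakov loop for a temporal component proportional to t_3 (no path ordering).\<close>
definition polyakov :: "real \<Rightarrow> real \<Rightarrow> (real \<Rightarrow> cmat) \<Rightarrow> cmat" where
  "polyakov e \<beta> a4 = mexp (csmul (\<i> * of_real e) (integral {0..\<beta>} a4))"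

end

theory Submission
  imports Defs
begin

text \<open>Conjugation by \<open>\<Omega>(\<tau>) = rot45 \<cdot> exp(i s (2\<pi>/\<beta>) \<tau> t\<^sub>3)\<close>, where \<open>rot45 \<in> SU(2)\<close>
  conjugates \<open>t\<^sub>1\<close> into \<open>t\<^sub>3\<close>, removes the phase of \<open>\<phi>\<^sub>w\<close>, and the logarithmic derivative of
  \<open>\<Omega>\<close> cancels the constant temporal field \<open>a\<^sup>w\<^sub>4\<close>. Since \<open>SU(2)\<close> has center \<open>{\<plusminus>1}\<close>, this
  \<open>\<Omega>\<close> is only antiperiodic, \<open>\<Omega>(\<beta>) = -\<Omega>(0)\<close>; redefining it at \<open>\<tau> = \<beta>\<close> makes it periodic at
  the price of a jump, while the adjoint action, which cannot see the sign, stays continuous and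
  periodic.\<close>

subsection \<open>Calculus of 2\<times>2 matrices\<close>

lemma mat2_nth [simp]:
  "mat2 a b c d $ 1 $ 1 = a" "mat2 a b c d $ 1 $ 2 = b"
  "mat2 a b c d $ 2 $ 1 = c" "mat2 a b c d $ 2 $ 2 = d"
  by (simp_all add: mat2_def)

lemma cmat_eq_mat2: "(A::cmat) = mat2 (A$1$1) (A$1$2) (A$2$1) (A$2$2)"
  by (simp add: vec_eq_iff forall_2)

lemma mat2_eq_iff: "mat2 a b c d = mat2 a' b' c' d' \<longleftrightarrow> a = a' \<and> b = b' \<and> c = c' \<and> d = d'"
  by (metis mat2_nth)

lemma mat2_mult [simp]:
  "mat2 a b c d ** mat2 a' b' c' d' =
     mat2 (a*a' + b*c') (a*b' + b*d') (c*a' + d*c') (c*b' + d*d')"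
  by (subst cmat_eq_mat2) (simp add: matrix_matrix_mult_def sum_2)

lemma mat2_add [simp]: "mat2 a b c d + mat2 a' b' c' d' = mat2 (a+a') (b+b') (c+c') (d+d')"
  by (subst cmat_eq_mat2) simp

lemma mat2_uminus [simp]: "- mat2 a b c d = mat2 (-a) (-b) (-c) (-d)"
  by (subst cmat_eq_mat2) simp

lemma mat2_scaleR [simp]: "r *\<^sub>R mat2 a b c d = mat2 (r *\<^sub>R a) (r *\<^sub>R b) (r *\<^sub>R c) (r *\<^sub>R d)"
  by (subst cmat_eq_mat2) simp

lemma csmul_mat2 [simp]: "csmul k (mat2 a b c d) = mat2 (k*a) (k*b) (k*c) (k*d)"
  by (subst cmat_eq_mat2) (simp add: csmul_def)

lemma dagger_mat2 [simp]: "dagger (mat2 a b c d) = mat2 (cnj a) (cnj c) (cnj b) (cnj d)"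
  by (subst cmat_eq_mat2) (simp add: dagger_def)

lemma det_mat2 [simp]: "det (mat2 a b c d) = a*d - b*c"
  by (simp add: det_2)

lemma mat1_eq_mat2: "(mat 1 :: cmat) = mat2 1 0 0 1"
  by (subst cmat_eq_mat2) (simp add: mat_def)

lemma zero_eq_mat2: "(0 :: cmat) = mat2 0 0 0 0"
  by (subst cmat_eq_mat2) simp

lemma dagger_add_scaleR: "dagger (a *\<^sub>R X + b *\<^sub>R Y) = a *\<^sub>R dagger X + b *\<^sub>R dagger Y"
  by (simp add: dagger_def vec_eq_iff)

lemma conj_uminus: "(- A) ** X ** dagger (- A) = A ** X ** dagger (A::cmat)"
  by (subst (1 2 3 4) cmat_eq_mat2[of A], subst (1 2) cmat_eq_mat2[of X]) (simp add: algebra_simps)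

lemma continuous_on_mmult [continuous_intros]:
  "continuous_on S f \<Longrightarrow> continuous_on S g \<Longrightarrow> continuous_on S (\<lambda>x. f x ** (g x :: cmat))"
  unfolding matrix_matrix_mult_def by (intro continuous_intros)

lemma continuous_on_dagger [continuous_intros]:
  "continuous_on S f \<Longrightarrow> continuous_on S (\<lambda>x. dagger (f x))"
  unfolding dagger_def by (intro continuous_intros)

lemma tendsto_mat2:
  assumes "(f \<longlongrightarrow> a) F" "(g \<longlongrightarrow> b) F" "(h \<longlongrightarrow> c) F" "(k \<longlongrightarrow> d) F"
  shows "((\<lambda>x. mat2 (f x) (g x) (h x) (k x)) \<longlongrightarrow> mat2 a b c d) F"
proof -
  have mat2_chi: "mat2 a b c d =
      (\<chi> i j. if i = 1 then (if j = 1 then a else b) else (if j = 1 then c else d))" for a b c d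
    by (simp add: vec_eq_iff forall_2)
  show ?thesis
    unfolding mat2_chi by (intro tendsto_vec_lambda) (simp add: assms)
qed

lemma sum_mat2:
  "(\<Sum>i\<in>A. mat2 (f i) (g i) (h i) (k i)) = mat2 (sum f A) (sum g A) (sum h A) (sum k A)"
  by (induction A rule: infinite_finite_induct) (simp_all add: zero_eq_mat2)

lemma sums_mat2:
  "f sums a \<Longrightarrow> g sums b \<Longrightarrow> h sums c \<Longrightarrow> k sums d \<Longrightarrow>
    (\<lambda>n. mat2 (f n) (g n) (h n) (k n)) sums mat2 a b c d"
  unfolding sums_def sum_mat2 by (rule tendsto_mat2)

lemma mpow_diag: "mpow (mat2 a 0 0 d) n = mat2 (a^n) 0 0 (d^n)"
  by (induction n) (simp_all add: mat1_eq_mat2)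

lemma mexp_diag: "mexp (mat2 a 0 0 d) = mat2 (exp a) 0 0 (exp d)"
proof -
  have "(\<lambda>n. (1 / fact n) *\<^sub>R mpow (mat2 a 0 0 d) n) sums mat2 (exp a) 0 0 (exp d)"
    unfolding mpow_diag mat2_scaleR
    using sums_mat2[OF exp_converges[of a] sums_zero sums_zero exp_converges[of d]]
    by (simp add: divide_inverse_commute)
  then show ?thesis
    unfolding mexp_def by (rule sums_unique[symmetric])
qed

subsection \<open>Smoothness and discontinuity\<close>

definition cos_sin_tower :: "real \<Rightarrow> 'a \<Rightarrow> 'a \<Rightarrow> nat \<Rightarrow> real \<Rightarrow> 'a::real_normed_vector" where
  "cos_sin_tower k A B n t = k ^ n *\<^sub>R (cos (k*t + n*pi/2) *\<^sub>R A + sin (k*t + n*pi/2) *\<^sub>R B)"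

lemma cos_sin_tower_has_vector_derivative:
  "(cos_sin_tower k A B n has_vector_derivative cos_sin_tower k A B (Suc n) t) (at t)"
proof -
  have quarter_shift: "cos (x + pi/2) = - sin x" "sin (x + pi/2) = cos x" for x
    by (simp_all add: cos_add sin_add)
  have shift: "k*t + real (Suc n) * pi/2 = (k*t + n*pi/2) + pi/2"
    by (simp add: algebra_simps add_divide_distrib)
  show ?thesis
    unfolding cos_sin_tower_def shift quarter_shift
    by (auto intro!: derivative_eq_intros simp: algebra_simps)
qed

lemma smooth_onI_derivative_tower:
  assumes "\<And>n t. (D n has_vector_derivative D (Suc n) t) (at t)"
    and "\<And>t. t \<in> S \<Longrightarrow> f t = D 0 t"
  shows "smooth_on S f"
  unfolding smooth_on_def
proof (intro exI[of _ "D(0 := f)"] conjI allI ballI)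
  fix n t assume "t \<in> S"
  have "(D n has_vector_derivative D (Suc n) t) (at t within S)"
    using assms(1) by (rule has_vector_derivative_at_within)
  then show "((D(0 := f)) n has_vector_derivative (D(0 := f)) (Suc n) t) (at t within S)"
    using \<open>t \<in> S\<close> assms(2) by (cases n) (auto intro: has_vector_derivative_transform)
qed simp

lemma not_continuous_within_changed_point:
  fixes f g :: "'a::metric_space \<Rightarrow> 'b::t2_space"
  assumes "continuous (at x within S) g" and "x islimpt S"
    and "\<And>y. y \<in> S \<Longrightarrow> y \<noteq> x \<Longrightarrow> f y = g y" and "f x \<noteq> g x"
  shows "\<not> continuous (at x within S) f"
proof
  assume "continuous (at x within S) f"
  then have "(f \<longlongrightarrow> f x) (at x within S)"
    by (simp add: continuous_within)
  moreover have "(f \<longlongrightarrow> g x) (at x within S)"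
  proof (rule Lim_transform_eventually)
    show "(g \<longlongrightarrow> g x) (at x within S)"
      using assms(1) by (simp add: continuous_within)
    show "\<forall>\<^sub>F y in at x within S. g y = f y"
      using assms(3) by (auto simp: eventually_at_filter)
  qed
  moreover have "\<not> trivial_limit (at x within S)"
    using assms(2) by (simp add: trivial_limit_within)
  ultimately show False
    using tendsto_unique assms(4) by blast
qed

subsection \<open>The unwinding gauge transformation\<close>

definition inv_sqrt2 :: complex where "inv_sqrt2 = of_real (1 / sqrt 2)"

lemma inv_sqrt2_simps [simp]:
  "cnj inv_sqrt2 = inv_sqrt2" "inv_sqrt2 * inv_sqrt2 = 1/2" "inv_sqrt2 * (inv_sqrt2 * z) = z/2"
  "inv_sqrt2 \<noteq> 0"
proof -
  show sq: "inv_sqrt2 * inv_sqrt2 = 1/2"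
    unfolding inv_sqrt2_def of_real_mult[symmetric] by (simp add: real_divide_square_eq)
  then show "inv_sqrt2 * (inv_sqrt2 * z) = z/2"
    by (metis mult.assoc times_divide_eq_left mult_1 mult.commute)
qed (simp_all add: inv_sqrt2_def)

definition rot45 :: cmat where "rot45 = mat2 inv_sqrt2 inv_sqrt2 (- inv_sqrt2) inv_sqrt2"

definition unwinding :: "real \<Rightarrow> cmat" where
  "unwinding x = rot45 ** mat2 (cis x) 0 0 (cis (-x))"

text \<open>\<open>J3 = 2 i t\<^sub>3\<close>, the generator of \<open>x \<mapsto> exp(2 i x t\<^sub>3)\<close>.\<close>
definition J3 :: cmat where "J3 = mat2 \<i> 0 0 (-\<i>)"

lemma scaleR_complex: "r *\<^sub>R (z::complex) = of_real r * z"
  by (rule scaleR_conv_of_real)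

lemma cis_minus_eq_divide: "cis (- x) = 1 / cis x"
  by (simp add: divide_inverse)

lemma cis_minus_pi: "cis (- pi) = -1"
  using cis_inverse[of pi] by simp

lemma unwinding_eq_mat2:
  "unwinding x = mat2 (inv_sqrt2 * cis x) (inv_sqrt2 * cis (-x)) (-(inv_sqrt2 * cis x)) (inv_sqrt2 * cis (-x))"
  by (simp add: unwinding_def rot45_def)

lemma unwinding_SU2: "unwinding x \<in> SU2"
  by (simp add: SU2_def unwinding_eq_mat2 mat1_eq_mat2 cis_cnj cis_mult algebra_simps)

lemma rot45_SU2: "rot45 \<in> SU2"
  by (simp add: SU2_def rot45_def mat1_eq_mat2 algebra_simps)

lemma unwinding_0: "unwinding 0 = rot45"
  by (simp add: unwinding_eq_mat2 rot45_def)

lemma unwinding_sign_pi: "s \<in> {1, -1} \<Longrightarrow> unwinding (pi * s) = - rot45"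
  using cis_minus_pi by (auto simp: unwinding_eq_mat2 rot45_def)

lemma cis_eq_cos_sin: "cis x = of_real (cos x) + \<i> * of_real (sin x)"
  by (simp add: complex_eq_iff)

lemma unwinding_cos_sin: "unwinding x = cos x *\<^sub>R rot45 + sin x *\<^sub>R (rot45 ** J3)"
  by (simp add: unwinding_eq_mat2 rot45_def J3_def cis_eq_cos_sin scaleR_complex
      cos_minus sin_minus algebra_simps)

lemma continuous_on_unwinding: "continuous_on S (\<lambda>\<tau>. unwinding (k * \<tau>))"
  unfolding unwinding_cos_sin by (intro continuous_intros)

lemma dagger_unwinding_has_vector_derivative:
  "((\<lambda>t. dagger (unwinding (k*t))) has_vector_derivative
      - k *\<^sub>R (J3 ** dagger (unwinding (k*t)))) (at t)"
proof -
  have "((\<lambda>t. cos (k*t) *\<^sub>R dagger rot45 + sin (k*t) *\<^sub>R dagger (rot45 ** J3)) has_vector_derivative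
      (- (k * sin (k*t))) *\<^sub>R dagger rot45 + (k * cos (k*t)) *\<^sub>R dagger (rot45 ** J3)) (at t)"
    by (auto intro!: derivative_eq_intros simp: mult.commute)
  moreover have "(- (k * sin (k*t))) *\<^sub>R dagger rot45 + (k * cos (k*t)) *\<^sub>R dagger (rot45 ** J3)
      = - k *\<^sub>R (J3 ** dagger (unwinding (k*t)))"
    by (simp add: unwinding_eq_mat2 rot45_def J3_def cis_eq_cos_sin scaleR_complex
        cos_minus sin_minus algebra_simps)
  ultimately show ?thesis
    by (simp add: unwinding_cos_sin dagger_add_scaleR)
qed

lemma unwinding_conj_phi_w:
  "unwinding (pi * s / \<beta> * \<tau>) ** phi_w v s \<beta> \<tau> ** dagger (unwinding (pi * s / \<beta> * \<tau>)) = phi_u v"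
proof -
  have exp_half: "exp (of_real y * \<i> * (1/2)) = cis (y/2)" "exp (of_real y * \<i> * (-1/2)) = cis (-(y/2))"
    for y
    by (simp_all add: cis_conv_exp mult_ac)
  have "phi_w v s \<beta> \<tau> =
      mat2 0 (of_real v * cis (-(2 * (pi * s / \<beta>) * \<tau>))) (of_real v * cis (2 * (pi * s / \<beta>) * \<tau>)) 0"
    unfolding phi_w_def t1_def t3_def csmul_mat2 mult_zero_right mexp_diag exp_half mat2_mult
    by (simp add: mat2_eq_iff algebra_simps)
  then show ?thesis
    by (simp add: unwinding_eq_mat2 phi_u_def t3_def cis_cnj cis_mult algebra_simps)
qed

text \<open>The pure-gauge term \<open>(i/e) \<Omega> \<partial>\<^sub>\<tau>\<Omega>\<^sup>\<dagger>\<close> of \<open>\<Omega> = unwinding (k\<tau>)\<close> is \<open>(2k/e) \<Omega> t\<^sub>3 \<Omega>\<^sup>\<dagger>\<close>.\<close>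
lemma unwinding_cancels_temporal_field:
  assumes "e \<noteq> 0"
  shows "unwinding x ** csmul (of_real (-(2*k/e))) t3 ** dagger (unwinding x)
    + csmul (\<i> / of_real e) (unwinding x ** (- k *\<^sub>R (J3 ** dagger (unwinding x)))) = 0"
  using assms
  by (simp add: unwinding_eq_mat2 J3_def t3_def zero_eq_mat2 cis_cnj cis_minus_eq_divide
      scaleR_complex field_simps)

definition unwinding_gauge :: "real \<Rightarrow> real \<Rightarrow> real \<Rightarrow> cmat" where
  "unwinding_gauge s \<beta> \<tau> = (if \<tau> = \<beta> then rot45 else unwinding (pi * s / \<beta> * \<tau>))"

context
  fixes s \<beta> :: real
  assumes sign: "s \<in> {1, -1}" and beta_pos: "\<beta> > 0"
begin

lemma unwinding_gauge_periodic: "unwinding_gauge s \<beta> 0 = rot45" "unwinding_gauge s \<beta> \<beta> = rot45"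
  using beta_pos by (simp_all add: unwinding_gauge_def unwinding_0)

lemma unwinding_at_beta: "unwinding (pi * s / \<beta> * \<beta>) = - rot45"
  using unwinding_sign_pi[OF sign] beta_pos by simp

lemma unwinding_gauge_conj:
  "unwinding_gauge s \<beta> \<tau> ** X ** dagger (unwinding_gauge s \<beta> \<tau>)
    = unwinding (pi * s / \<beta> * \<tau>) ** X ** dagger (unwinding (pi * s / \<beta> * \<tau>))"
  using conj_uminus[of rot45 X] unwinding_at_beta by (simp add: unwinding_gauge_def)

lemma unwinding_gauge_discontinuous: "\<not> continuous (at \<beta> within {0..\<beta>}) (unwinding_gauge s \<beta>)"
proof (rule not_continuous_within_changed_point)
  show "continuous (at \<beta> within {0..\<beta>}) (\<lambda>\<tau>. unwinding (pi * s / \<beta> * \<tau>))"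
    using beta_pos
    by (intro continuous_on_eq_continuous_within[THEN iffD1, rule_format, OF continuous_on_unwinding])
      simp
  show "\<beta> islimpt {0..\<beta>}"
    using beta_pos by (simp add: islimpt_Icc)
  show "unwinding_gauge s \<beta> \<beta> \<noteq> unwinding (pi * s / \<beta> * \<beta>)"
    unfolding unwinding_gauge_periodic unwinding_at_beta by (simp add: rot45_def mat2_eq_iff)
qed (simp add: unwinding_gauge_def)

lemma smooth_on_unwinding_gauge: "smooth_on ({0..\<beta>} - {\<beta>}) (unwinding_gauge s \<beta>)"
proof (rule smooth_onI_derivative_tower)
  let ?D = "cos_sin_tower (pi * s / \<beta>) rot45 (rot45 ** J3)"
  show "(?D n has_vector_derivative ?D (Suc n) t) (at t)" for n t
    by (rule cos_sin_tower_has_vector_derivative)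
  show "unwinding_gauge s \<beta> t = ?D 0 t" if "t \<in> {0..\<beta>} - {\<beta>}" for t
    using that by (simp add: unwinding_gauge_def unwinding_cos_sin cos_sin_tower_def)
qed

lemma gauge_a_unwinding_gauge:
  assumes "e > 0" and "\<tau> \<in> {0..<\<beta>}"
  shows "gauge_a e \<beta> (unwinding_gauge s \<beta>) (a_w e s \<beta>) \<mu> \<tau> = a_u \<mu> \<tau>"
proof (cases "\<mu> = 4")
  case True
  let ?k = "pi * s / \<beta>"
  have "((\<lambda>t. dagger (unwinding_gauge s \<beta> t)) has_vector_derivative
      - ?k *\<^sub>R (J3 ** dagger (unwinding (?k*\<tau>)))) (at \<tau> within {0..\<beta>})"
  proof (rule has_vector_derivative_transform_within[where d = "\<beta> - \<tau>"])
    show "((\<lambda>t. dagger (unwinding (?k*t))) has_vector_derivative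
        - ?k *\<^sub>R (J3 ** dagger (unwinding (?k*\<tau>)))) (at \<tau> within {0..\<beta>})"
      by (rule has_vector_derivative_at_within[OF dagger_unwinding_has_vector_derivative])
  qed (use assms(2) in \<open>auto simp: unwinding_gauge_def dist_real_def\<close>)
  then have "dmu \<beta> \<mu> (\<lambda>t. dagger (unwinding_gauge s \<beta> t)) \<tau> = - ?k *\<^sub>R (J3 ** dagger (unwinding (?k*\<tau>)))"
    using True assms(2) beta_pos by (simp add: dmu_def vector_derivative_within_closed_interval)
  moreover have "a_w e s \<beta> \<mu> \<tau> = csmul (of_real (-(2*?k/e))) t3"
    using True by (simp add: a_w_def field_simps)
  moreover have "unwinding_gauge s \<beta> \<tau> = unwinding (?k*\<tau>)"
    using assms(2) by (simp add: unwinding_gauge_def)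
  ultimately show ?thesis
    using unwinding_cancels_temporal_field[of e "?k*\<tau>" ?k] assms(1)
    by (simp add: gauge_a_def a_u_def)
qed (simp add: gauge_a_def a_w_def dmu_def a_u_def matrix_matrix_mult_def csmul_def vec_eq_iff)

lemma continuous_on_unwinding_gauge_conj:
  "continuous_on S \<delta>a \<Longrightarrow>
    continuous_on S (\<lambda>\<tau>. unwinding_gauge s \<beta> \<tau> ** \<delta>a \<tau> ** dagger (unwinding_gauge s \<beta> \<tau>))"
  unfolding unwinding_gauge_conj by (intro continuous_intros continuous_on_unwinding)

end

subsection \<open>Polyakov loops\<close>

lemma polyakov_const_t3:
  assumes "\<beta> \<ge> 0"
  shows "polyakov e \<beta> (\<lambda>_. csmul (of_real c) t3) = mat2 (cis (e*\<beta>*c/2)) 0 0 (cis (-(e*\<beta>*c/2)))"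
  using assms
  by (simp add: polyakov_def integral_const_real t3_def scaleR_complex mexp_diag
      cis_conv_exp mult_ac)

lemma polyakov_a_w:
  assumes "e > 0" "\<beta> > 0" "s \<in> {1, -1}"
  shows "polyakov e \<beta> (a_w e s \<beta> 4) = - mat 1"
proof -
  have "a_w e s \<beta> 4 = (\<lambda>_. csmul (of_real (- s * 2 * pi / (e * \<beta>))) t3)"
    by (simp add: a_w_def fun_eq_iff)
  moreover have "e * \<beta> * (- s * 2 * pi / (e * \<beta>)) / 2 = - (pi * s)"
    using assms(1,2) by (simp add: field_simps)
  ultimately show ?thesis
    using assms polyakov_const_t3[of \<beta> e "- s * 2 * pi / (e * \<beta>)"] cis_minus_pi
    by (auto simp: mat1_eq_mat2)
qed

lemma polyakov_a_u:
  assumes "\<beta> \<ge> 0"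
  shows "polyakov e \<beta> (a_u 4) = mat 1"
proof -
  have "a_u 4 = (\<lambda>_. csmul (of_real 0) t3)"
    by (simp add: a_u_def csmul_def fun_eq_iff vec_eq_iff)
  then show ?thesis
    using assms polyakov_const_t3[of \<beta> e 0] by (simp add: mat1_eq_mat2)
qed

theorem proposition7:
  fixes e \<beta> v s :: real
  assumes "e > 0" and "\<beta> > 0" and "v > 0" and "s \<in> {1, -1}"
  shows "\<exists>\<Omega> :: real \<Rightarrow> cmat.
      (\<forall>\<tau>\<in>{0..\<beta>}. \<Omega> \<tau> \<in> SU2)
    \<and> (\<exists>\<tau>0\<in>{0..\<beta>}.
          \<not> continuous (at \<tau>0 within {0..\<beta>}) \<Omega>
        \<and> smooth_on ({0..\<beta>} - {\<tau>0}) \<Omega>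
        \<and> (\<forall>\<mu>\<in>{1..4}. \<forall>\<tau>\<in>{0..\<beta>} - {\<tau>0}.
              gauge_a e \<beta> \<Omega> (a_w e s \<beta>) \<mu> \<tau> = a_u \<mu> \<tau>))
    \<and> \<Omega> 0 = \<Omega> \<beta>
    \<and> (\<forall>\<tau>\<in>{0..\<beta>}. \<Omega> \<tau> ** phi_w v s \<beta> \<tau> ** dagger (\<Omega> \<tau>) = phi_u v)
    \<and> (\<forall>\<delta>a :: real \<Rightarrow> cmat.
          continuous_on {0..\<beta>} \<delta>a \<and> (\<forall>\<tau>\<in>{0..\<beta>}. \<delta>a \<tau> \<in> su2) \<and> \<delta>a 0 = \<delta>a \<beta>
          \<longrightarrow> continuous_on {0..\<beta>} (\<lambda>\<tau>. \<Omega> \<tau> ** \<delta>a \<tau> ** dagger (\<Omega> \<tau>))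
            \<and> \<Omega> 0 ** \<delta>a 0 ** dagger (\<Omega> 0) = \<Omega> \<beta> ** \<delta>a \<beta> ** dagger (\<Omega> \<beta>))
    \<and> polyakov e \<beta> (a_w e s \<beta> 4) = - mat 1
    \<and> polyakov e \<beta> (a_u 4) = mat 1"
proof (intro exI[of _ "unwinding_gauge s \<beta>"] conjI bexI[of _ \<beta>] ballI allI impI)
  show "unwinding_gauge s \<beta> \<tau> \<in> SU2" for \<tau>
    by (simp add: unwinding_gauge_def unwinding_SU2 rot45_SU2)
  show "gauge_a e \<beta> (unwinding_gauge s \<beta>) (a_w e s \<beta>) \<mu> \<tau> = a_u \<mu> \<tau>"
    if "\<tau> \<in> {0..\<beta>} - {\<beta>}" for \<mu> \<tau>
    using gauge_a_unwinding_gauge[OF assms(4,2,1)] that by auto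
  show "unwinding_gauge s \<beta> \<tau> ** phi_w v s \<beta> \<tau> ** dagger (unwinding_gauge s \<beta> \<tau>) = phi_u v" for \<tau>
    unfolding unwinding_gauge_conj[OF assms(4,2)] by (rule unwinding_conj_phi_w)
  show "continuous_on {0..\<beta>} (\<lambda>\<tau>. unwinding_gauge s \<beta> \<tau> ** \<delta>a \<tau> ** dagger (unwinding_gauge s \<beta> \<tau>))"
    if "continuous_on {0..\<beta>} \<delta>a \<and> (\<forall>\<tau>\<in>{0..\<beta>}. \<delta>a \<tau> \<in> su2) \<and> \<delta>a 0 = \<delta>a \<beta>" for \<delta>a
    \<comment> \<open>only the continuity of \<open>\<delta>a\<close> is needed, not that it is \<open>su(2)\<close>-valued\<close>
    using continuous_on_unwinding_gauge_conj[OF assms(4,2)] that by blast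
qed (use assms unwinding_gauge_periodic[OF assms(4,2)] unwinding_gauge_discontinuous[OF assms(4,2)]
      smooth_on_unwinding_gauge[OF assms(4,2)] polyakov_a_w polyakov_a_u in auto)

end
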